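(* Let $\mathsf T$ be a quantifier-free transduction, $\Pi$ a hereditary class property, $f:\mathbb N\to\mathbb N$ non-decreasing and $p$ a positive integer. If a class $\mathscr C$ has an $f$-bounded $\Pi$-decomposition with parameter $p$, then $\mathsf T(\mathscr C)$ has an $f$-bounded $\mathsf T(\Pi)$-decomposition with parameter $p$, where $\mathsf T(\Pi)=\{\mathscr D:\exists\mathscr D'\in\Pi\text{ with }\mathscr D\subseteq\mathsf T(\mathscr D')\}$.
   Context: Graphs are finite and simple. For a set $\Sigma$ of unary relation symbols, a $\Sigma$-expansion of a graph interprets these predicates on its vertex set. A simple interpretation $\mathsf I=(\nu(x),\eta(x,y))$ is a pair of first-order formulas in the language of $\Sigma$-expanded graphs with $\eta$ symmetric and anti-reflexive; $\mathsf I(G^+)$ has vertex set $\nu(G^+)$ and edge set $\eta(G^+)\cap\nu(G^+)^2$. A transduction $\mathsf T$ maps $G$ to $\mathsf T(G)=\{\mathsf I(G^+):G^+$ a $\Sigma$-expansion of $G\}$, and $\mathsf T(\mathscr D)=\bigcup_{G\in\mathscr D}\mathsf T(G)$; it is quantifier-free if $\nu,\eta$ are quantifier-free. A hereditary class is a class closed under isomorphism and induced subgraphs; a hereditary class property is a set $\Pi$ of hereditary classes closed under passing to hereditary subclasses. A class $\mathscr C$ has an $f$-bounded $\Pi$-decomposition with parameter $p$ if there is $\mathscr D_p\in\Pi$ such that every $G\in\mathscr C$ has a partition $V_1,\dots,V_N$ of $V(G)$ with $N\le f(|G|)$ and $G[V_{i_1}\cup\dots\cup V_{i_p}]\in\mathscr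 D_p$ for all $i_1,\dots,i_p\in[N]$ (this definition is applied verbatim with $\mathsf T(\Pi)$ in place of $\Pi$). *)

theory Defs
  imports Main
begin

type_synonym graph = "nat set \<times> (nat \<Rightarrow> nat \<Rightarrow> bool)"

definition verts :: "graph \<Rightarrow> nat set" where "verts G = fst G"
definition adj :: "graph \<Rightarrow> nat \<Rightarrow> nat \<Rightarrow> bool" where "adj G = snd G"

definition is_graph :: "graph \<Rightarrow> bool" where
  "is_graph G \<longleftrightarrow> finite (verts G)
     \<and> (\<forall>a b. adj G a b \<longrightarrow> a \<in> verts G \<and> b \<in> verts G)
     \<and> (\<forall>a b. adj G a b \<longrightarrow> adj G b a)
     \<and> (\<forall>a. \<not> adj G a a)"

definition induced :: "graph \<Rightarrow> nat set \<Rightarrow> graph" where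
  "induced G U = (verts G \<inter> U, \<lambda>a b. a \<in> U \<and> b \<in> U \<and> adj G a b)"

definition graph_iso :: "graph \<Rightarrow> graph \<Rightarrow> bool" where
  "graph_iso G H \<longleftrightarrow> (\<exists>h. bij_betw h (verts G) (verts H)
     \<and> (\<forall>a\<in>verts G. \<forall>b\<in>verts G. adj G a b \<longleftrightarrow> adj H (h a) (h b)))"

definition hereditary_class :: "graph set \<Rightarrow> bool" where
  "hereditary_class C \<longleftrightarrow> (\<forall>G\<in>C. is_graph G)
     \<and> (\<forall>G\<in>C. \<forall>H. is_graph H \<and> graph_iso G H \<longrightarrow> H \<in> C)
     \<and> (\<forall>G\<in>C. \<forall>U. U \<subseteq> verts G \<longrightarrow> induced G U \<in> C)"

definition hereditary_property :: "graph set set \<Rightarrow> bool" where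
  "hereditary_property \<Pi> \<longleftrightarrow> (\<forall>D\<in>\<Pi>. hereditary_class D)
     \<and> (\<forall>D\<in>\<Pi>. \<forall>D'. hereditary_class D' \<and> D' \<subseteq> D \<longrightarrow> D' \<in> \<Pi>)"

datatype fo =
    FFalse
  | Eq nat nat
  | Adj nat nat
  | Pred nat nat          (* Pred i x : x satisfies unary predicate i *)
  | Neg fo
  | Conj fo fo
  | Disj fo fo
  | Ex nat fo

fun qfree :: "fo \<Rightarrow> bool" where
  "qfree (Neg \<phi>) = qfree \<phi>"
| "qfree (Conj \<phi> \<psi>) = (qfree \<phi> \<and> qfree \<psi>)"
| "qfree (Disj \<phi> \<psi>) = (qfree \<phi> \<and> qfree \<psi>)"
| "qfree (Ex x \<phi>) = False"
| "qfree _ = True"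

fun fvars :: "fo \<Rightarrow> nat set" where
  "fvars FFalse = {}"
| "fvars (Eq x y) = {x, y}"
| "fvars (Adj x y) = {x, y}"
| "fvars (Pred i x) = {x}"
| "fvars (Neg \<phi>) = fvars \<phi>"
| "fvars (Conj \<phi> \<psi>) = fvars \<phi> \<union> fvars \<psi>"
| "fvars (Disj \<phi> \<psi>) = fvars \<phi> \<union> fvars \<psi>"
| "fvars (Ex x \<phi>) = fvars \<phi> - {x}"

fun preds :: "fo \<Rightarrow> nat set" where
  "preds (Pred i x) = {i}"
| "preds (Neg \<phi>) = preds \<phi>"
| "preds (Conj \<phi> \<psi>) = preds \<phi> \<union> preds \<psi>"
| "preds (Disj \<phi> \<psi>) = preds \<phi> \<union> preds \<psi>"
| "preds (Ex x \<phi>) = preds \<phi>"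
| "preds _ = {}"

fun sat :: "graph \<Rightarrow> (nat \<Rightarrow> nat set) \<Rightarrow> (nat \<Rightarrow> nat) \<Rightarrow> fo \<Rightarrow> bool" where
  "sat G P s FFalse = False"
| "sat G P s (Eq x y) = (s x = s y)"
| "sat G P s (Adj x y) = adj G (s x) (s y)"
| "sat G P s (Pred i x) = (s x \<in> P i)"
| "sat G P s (Neg \<phi>) = (\<not> sat G P s \<phi>)"
| "sat G P s (Conj \<phi> \<psi>) = (sat G P s \<phi> \<and> sat G P s \<psi>)"
| "sat G P s (Disj \<phi> \<psi>) = (sat G P s \<phi> \<or> sat G P s \<psi>)"
| "sat G P s (Ex x \<phi>) = (\<exists>a\<in>verts G. sat G P (s(x := a)) \<phi>)"

definition expansion :: "nat set \<Rightarrow> graph \<Rightarrow> (nat \<Rightarrow> nat set) \<Rightarrow> bool" where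
  "expansion \<Sigma> G P \<longleftrightarrow> (\<forall>i\<in>\<Sigma>. P i \<subseteq> verts G) \<and> (\<forall>i. i \<notin> \<Sigma> \<longrightarrow> P i = {})"

text \<open>A transduction is given by (Sigma, nu, eta); nu(x) has free variable 0 = x,
eta(x,y) has free variables 0 = x and 1 = y.\<close>

type_synonym transduction = "nat set \<times> fo \<times> fo"

definition asg2 :: "nat \<Rightarrow> nat \<Rightarrow> nat \<Rightarrow> nat" where
  "asg2 a b = (\<lambda>i. if i = 0 then a else b)"

definition is_transduction :: "transduction \<Rightarrow> bool" where
  "is_transduction T \<longleftrightarrow> (case T of (\<Sigma>, \<nu>, \<eta>) \<Rightarrow>
      finite \<Sigma> \<and> preds \<nu> \<subseteq> \<Sigma> \<and> preds \<eta> \<subseteq> \<Sigma>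
    \<and> fvars \<nu> \<subseteq> {0} \<and> fvars \<eta> \<subseteq> {0, 1}
    \<and> (\<forall>G P a b. sat G P (asg2 a b) \<eta> \<longleftrightarrow> sat G P (asg2 b a) \<eta>)
    \<and> (\<forall>G P a. \<not> sat G P (asg2 a a) \<eta>))"

definition quantifier_free :: "transduction \<Rightarrow> bool" where
  "quantifier_free T \<longleftrightarrow> (case T of (\<Sigma>, \<nu>, \<eta>) \<Rightarrow> qfree \<nu> \<and> qfree \<eta>)"

definition interp :: "transduction \<Rightarrow> graph \<Rightarrow> (nat \<Rightarrow> nat set) \<Rightarrow> graph" where
  "interp T G P = (case T of (\<Sigma>, \<nu>, \<eta>) \<Rightarrow>
     let V' = {v \<in> verts G. sat G P (\<lambda>_. v) \<nu>} in
     (V', \<lambda>a b. a \<in> V' \<and> b \<in> V' \<and> sat G P (asg2 a b) \<eta>))"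

definition trans_graph :: "transduction \<Rightarrow> graph \<Rightarrow> graph set" where
  "trans_graph T G = {H. is_graph H \<and>
     (\<exists>P. expansion (fst T) G P \<and> graph_iso (interp T G P) H)}"

definition trans_class :: "transduction \<Rightarrow> graph set \<Rightarrow> graph set" where
  "trans_class T D = (\<Union>G\<in>D. trans_graph T G)"

definition trans_property :: "transduction \<Rightarrow> graph set set \<Rightarrow> graph set set" where
  "trans_property T \<Pi> = {D. \<exists>D'\<in>\<Pi>. D \<subseteq> trans_class T D'}"

definition has_decomposition ::
  "(nat \<Rightarrow> nat) \<Rightarrow> graph set set \<Rightarrow> nat \<Rightarrow> graph set \<Rightarrow> bool" where
  "has_decomposition f \<Pi> p C \<longleftrightarrow> (\<exists>D\<in>\<Pi>. \<forall>G\<in>C. \<exists>N Vs.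
      N \<le> f (card (verts G))
    \<and> (\<Union>i\<in>{1..N}. Vs i) = verts G
    \<and> (\<forall>i\<in>{1..N}. \<forall>j\<in>{1..N}. i \<noteq> j \<longrightarrow> Vs i \<inter> Vs j = {})
    \<and> (\<forall>is. length is = p \<and> set is \<subseteq> {1..N} \<longrightarrow>
          induced G (\<Union>i\<in>set is. Vs i) \<in> D))"

end

theory Submission
  imports Defs
begin

text \<open>Let H be isomorphic to the interpretation of an expansion G+ of G \<in> C, with vertex
domain U = \<nu>(G+). Since \<nu> and \<eta> are quantifier-free, interpreting commutes with passing to
induced subgraphs on subsets of U (restricting the expansion accordingly). The graph G[U] lies
in C, so it splits into at most f(|U|) = f(|H|) parts any p of which induce a graph of the
class D \<in> \<Pi>; the isomorphism carries this partition to H, and the union of any p of its parts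
induces a graph in T(D). Decomposing G[U] rather than G gives N \<le> f(|H|) directly.\<close>

lemma sat_qfree_cong:
  assumes "qfree \<phi>" "\<forall>x. s x \<in> S" "\<forall>i. \<forall>v\<in>S. v \<in> P i \<longleftrightarrow> v \<in> P' i"
    "\<forall>a\<in>S. \<forall>b\<in>S. adj G a b \<longleftrightarrow> adj G' a b"
  shows "sat G P s \<phi> \<longleftrightarrow> sat G' P' s \<phi>"
  using assms by (induction \<phi>) auto

lemma is_graph_induced: "is_graph G \<Longrightarrow> is_graph (induced G U)"
  unfolding is_graph_def induced_def verts_def adj_def by auto

lemma verts_induced [simp]: "verts (induced G U) = verts G \<inter> U"
  by (simp add: induced_def verts_def)

lemma adj_induced [simp]: "adj (induced G U) a b \<longleftrightarrow> a \<in> U \<and> b \<in> U \<and> adj G a b"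
  by (simp add: induced_def adj_def)

lemma induced_induced [simp]: "induced (induced G U) S = induced G (U \<inter> S)"
  by (auto simp: induced_def verts_def adj_def)

lemma expansion_restrict:
  "expansion \<Sigma> G P \<Longrightarrow> expansion \<Sigma> (induced G S) (\<lambda>i. P i \<inter> S)"
  unfolding expansion_def by auto

lemma graph_iso_induced_image:
  assumes "bij_betw h (verts G) (verts H)"
    and "\<forall>a\<in>verts G. \<forall>b\<in>verts G. adj G a b \<longleftrightarrow> adj H (h a) (h b)"
    and "S \<subseteq> verts G"
  shows "graph_iso (induced G S) (induced H (h ` S))"
proof -
  have "inj_on h S"
    using assms(1,3) bij_betw_imp_inj_on inj_on_subset by blast
  moreover have "h ` S \<subseteq> verts H"
    using assms(1,3) bij_betw_imp_surj_on by blast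
  ultimately have "bij_betw h (verts (induced G S)) (verts (induced H (h ` S)))"
    using assms(3) by (simp add: bij_betw_def Int_absorb1 Int_absorb2)
  moreover have "\<forall>a\<in>S. \<forall>b\<in>S. adj G a b \<longleftrightarrow> adj H (h a) (h b)"
    using assms(2,3) by blast
  ultimately show ?thesis
    unfolding graph_iso_def by auto
qed

lemma interp_induced_qfree:
  assumes "quantifier_free T" and "S \<subseteq> verts (interp T G P)"
  shows "interp T (induced G S) (\<lambda>i. P i \<inter> S) = induced (interp T G P) S"
proof -
  obtain \<Sigma> \<nu> \<eta> where T: "T = (\<Sigma>, \<nu>, \<eta>)"
    by (cases T) auto
  let ?U = "{v \<in> verts G. sat G P (\<lambda>_. v) \<nu>}"
  let ?G' = "induced G S" and ?P' = "\<lambda>i. P i \<inter> S"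
  have qf: "qfree \<nu>" "qfree \<eta>"
    using assms(1) by (simp_all add: quantifier_free_def T)
  have SU: "S \<subseteq> ?U"
    using assms(2) by (simp add: interp_def T verts_def)
  have agree: "\<forall>i. \<forall>v\<in>S. v \<in> ?P' i \<longleftrightarrow> v \<in> P i" "\<forall>a\<in>S. \<forall>b\<in>S. adj ?G' a b \<longleftrightarrow> adj G a b"
    by auto
  have \<nu>: "sat ?G' ?P' (\<lambda>_. v) \<nu> \<longleftrightarrow> sat G P (\<lambda>_. v) \<nu>" if "v \<in> S" for v
    using sat_qfree_cong[OF qf(1) _ agree] that by simp
  have \<eta>: "sat ?G' ?P' (asg2 a b) \<eta> \<longleftrightarrow> sat G P (asg2 a b) \<eta>" if "a \<in> S" "b \<in> S" for a b
    using sat_qfree_cong[OF qf(2) _ agree] that by (simp add: asg2_def)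
  have "{v \<in> verts ?G'. sat ?G' ?P' (\<lambda>_. v) \<nu>} = S"
    using SU \<nu> by auto
  then show ?thesis
    using SU \<eta> by (auto simp: interp_def T induced_def verts_def adj_def fun_eq_iff)
qed

lemma trans_graph_qfree_induced:
  assumes "quantifier_free T" and "H \<in> trans_graph T G"
  obtains U h where "U \<subseteq> verts G" and "bij_betw h U (verts H)"
    and "\<And>S. S \<subseteq> U \<Longrightarrow> induced H (h ` S) \<in> trans_graph T (induced G S)"
proof -
  obtain P h where H: "is_graph H" and exp: "expansion (fst T) G P"
    and h: "bij_betw h (verts (interp T G P)) (verts H)"
    and h_adj: "\<forall>a\<in>verts (interp T G P). \<forall>b\<in>verts (interp T G P).
                  adj (interp T G P) a b \<longleftrightarrow> adj H (h a) (h b)"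
    using assms(2) unfolding trans_graph_def graph_iso_def by blast
  let ?U = "verts (interp T G P)"
  have "?U \<subseteq> verts G"
    by (auto simp: interp_def verts_def split: prod.splits)
  moreover have "induced H (h ` S) \<in> trans_graph T (induced G S)" if "S \<subseteq> ?U" for S
  proof -
    have "graph_iso (interp T (induced G S) (\<lambda>i. P i \<inter> S)) (induced H (h ` S))"
      using graph_iso_induced_image[OF h h_adj that] interp_induced_qfree[OF assms(1) that]
      by simp
    then show ?thesis
      unfolding trans_graph_def using is_graph_induced[OF H] expansion_restrict[OF exp] by blast
  qed
  ultimately show ?thesis
    using that h by blast
qed

lemma has_decomposition_transfer:
  assumes "has_decomposition f \<Pi> p C"
    and "\<And>H. H \<in> C' \<Longrightarrow> \<exists>G\<in>C. \<exists>h. bij_betw h (verts G) (verts H)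
           \<and> (\<forall>S \<subseteq> verts G. induced H (h ` S) \<in> trans_graph T (induced G S))"
  shows "has_decomposition f (trans_property T \<Pi>) p C'"
proof -
  obtain D where D: "D \<in> \<Pi>" and dec: "\<forall>G\<in>C. \<exists>N Vs.
      N \<le> f (card (verts G))
    \<and> (\<Union>i\<in>{1..N}. Vs i) = verts G
    \<and> (\<forall>i\<in>{1..N}. \<forall>j\<in>{1..N}. i \<noteq> j \<longrightarrow> Vs i \<inter> Vs j = {})
    \<and> (\<forall>xs. length xs = p \<and> set xs \<subseteq> {1..N} \<longrightarrow> induced G (\<Union>i\<in>set xs. Vs i) \<in> D)"
    using assms(1) unfolding has_decomposition_def by (elim bexE)
  have "\<exists>N Ws. N \<le> f (card (verts H))
    \<and> (\<Union>i\<in>{1..N}. Ws i) = verts H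
    \<and> (\<forall>i\<in>{1..N}. \<forall>j\<in>{1..N}. i \<noteq> j \<longrightarrow> Ws i \<inter> Ws j = {})
    \<and> (\<forall>xs. length xs = p \<and> set xs \<subseteq> {1..N} \<longrightarrow>
          induced H (\<Union>i\<in>set xs. Ws i) \<in> trans_class T D)"
    if H: "H \<in> C'" for H
  proof -
    obtain G h where "G \<in> C" and h: "bij_betw h (verts G) (verts H)"
      and h_induced: "\<forall>S \<subseteq> verts G. induced H (h ` S) \<in> trans_graph T (induced G S)"
      using assms(2)[OF H] by (elim bexE exE conjE)
    from bspec[OF dec \<open>G \<in> C\<close>] obtain N Vs where N: "N \<le> f (card (verts G))"
      and cover: "(\<Union>i\<in>{1..N}. Vs i) = verts G"
      and disjoint: "\<forall>i\<in>{1..N}. \<forall>j\<in>{1..N}. i \<noteq> j \<longrightarrow> Vs i \<inter> Vs j = {}"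
      and parts: "\<forall>xs. length xs = p \<and> set xs \<subseteq> {1..N} \<longrightarrow> induced G (\<Union>i\<in>set xs. Vs i) \<in> D"
      by (elim exE conjE)
    have inj: "inj_on h (verts G)" and onto: "h ` verts G = verts H"
      using h by (simp_all add: bij_betw_def)
    show ?thesis
    proof (intro exI[of _ N] exI[of _ "\<lambda>i. h ` Vs i"] conjI allI impI ballI)
      show "N \<le> f (card (verts H))"
        using N bij_betw_same_card[OF h] by simp
      show "(\<Union>i\<in>{1..N}. h ` Vs i) = verts H"
        by (metis image_UN cover onto)
    next
      fix i j assume ij: "i \<in> {1..N}" "j \<in> {1..N}" "i \<noteq> j"
      have "h ` Vs i \<inter> h ` Vs j = h ` (Vs i \<inter> Vs j)"
        using inj_on_image_Int[OF inj] ij cover by blast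
      then show "h ` Vs i \<inter> h ` Vs j = {}"
        using disjoint ij by simp
    next
      fix xs assume xs: "length xs = p \<and> set xs \<subseteq> {1..N}"
      let ?S = "\<Union>i\<in>set xs. Vs i"
      have "?S \<subseteq> verts G"
        using xs cover by blast
      then have "induced H (h ` ?S) \<in> trans_graph T (induced G ?S)"
        using h_induced by blast
      moreover have "(\<Union>i\<in>set xs. h ` Vs i) = h ` ?S"
        by blast
      ultimately show "induced H (\<Union>i\<in>set xs. h ` Vs i) \<in> trans_class T D"
        using parts xs unfolding trans_class_def by auto
    qed
  qed
  moreover have "trans_class T D \<in> trans_property T \<Pi>"
    using D unfolding trans_property_def by blast
  ultimately show ?thesis
    unfolding has_decomposition_def by (intro bexI[of _ "trans_class T D"] ballI)
qed

theorem mainTheorem13: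
  fixes T :: transduction and \<Pi> :: "graph set set" and f :: "nat \<Rightarrow> nat"
    and p :: nat and C :: "graph set"
  assumes "is_transduction T" and "quantifier_free T"
    and "hereditary_property \<Pi>"
    and "mono f" and "p > 0"
    and "hereditary_class C"
    and "has_decomposition f \<Pi> p C"
  shows "has_decomposition f (trans_property T \<Pi>) p (trans_class T C)"
proof (rule has_decomposition_transfer[OF assms(7)])
  fix H assume "H \<in> trans_class T C"
  then obtain G where "G \<in> C" and "H \<in> trans_graph T G"
    unfolding trans_class_def by blast
  then obtain U h where U: "U \<subseteq> verts G" and h: "bij_betw h U (verts H)"
    and h_induced: "\<And>S. S \<subseteq> U \<Longrightarrow> induced H (h ` S) \<in> trans_graph T (induced G S)"
    using trans_graph_qfree_induced[OF assms(2)] by blast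
  have "induced G U \<in> C"
    using assms(6) \<open>G \<in> C\<close> U unfolding hereditary_class_def by blast
  moreover have "verts (induced G U) = U"
    using U by auto
  moreover have "induced (induced G U) S = induced G S" if "S \<subseteq> U" for S
    using that by (simp add: Int_absorb1)
  ultimately show "\<exists>G'\<in>C. \<exists>h. bij_betw h (verts G') (verts H)
      \<and> (\<forall>S \<subseteq> verts G'. induced H (h ` S) \<in> trans_graph T (induced G' S))"
    using h h_induced by (intro bexI[of _ "induced G U"] exI[of _ h]) auto
qed

end
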